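(* Let $G$ be a non-trivial graph with maximum degree $\Delta$. Then $$ \begin{aligned} \tfrac{8}{11}\, H(G) \le H(\mathcal{L}(G)) \le H(G) & \quad \text{ if } \Delta<3,\\ \tfrac{4}{\Delta+3}\, H(G) \le H(\mathcal{L}(G)) \le (\Delta-1) H(G) & \quad \text{ if } 3 \le \Delta \le 4,\\ \tfrac{3}{2\Delta-1}\, H(G) \le H(\mathcal{L}(G)) \le (\Delta-1) H(G) & \quad \text{ if } \Delta>4. \end{aligned} $$
   Context: All graphs are finite and simple. A graph is non-trivial if each of its connected components has at least two edges. $d_u$ is the degree of $u$. The harmonic index is $H(G)=\sum_{uv\in E(G)}\frac{2}{d_u+d_v}$. The line graph $\mathcal{L}(G)$ has vertex set $E(G)$, two vertices being adjacent iff the corresponding edges share an end vertex in $G$. *)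

theory Defs
  imports Complex_Main
begin

definition graph :: "'a set \<Rightarrow> 'a set set \<Rightarrow> bool" where
  "graph V E \<longleftrightarrow> finite V \<and> (\<forall>e\<in>E. e \<subseteq> V \<and> card e = 2)"

definition degree :: "'a set set \<Rightarrow> 'a \<Rightarrow> nat" where
  "degree E u = card {e \<in> E. u \<in> e}"

definition max_degree :: "'a set \<Rightarrow> 'a set set \<Rightarrow> nat" where
  "max_degree V E = Max (degree E ` V)"

definition adjacent :: "'a set set \<Rightarrow> 'a \<Rightarrow> 'a \<Rightarrow> bool" where
  "adjacent E u v \<longleftrightarrow> {u, v} \<in> E"

definition component :: "'a set \<Rightarrow> 'a set set \<Rightarrow> 'a \<Rightarrow> 'a set" where
  "component V E v = {w \<in> V. (adjacent E)\<^sup>*\<^sup>* v w}"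

definition nontrivial_graph :: "'a set \<Rightarrow> 'a set set \<Rightarrow> bool" where
  "nontrivial_graph V E \<longleftrightarrow>
     (\<forall>v\<in>V. card {e \<in> E. e \<subseteq> component V E v} \<ge> 2)"

definition harmonic_index :: "'a set set \<Rightarrow> real" where
  "harmonic_index E = (\<Sum>e\<in>E. 2 / (\<Sum>u\<in>e. real (degree E u)))"

definition line_graph_edges :: "'a set set \<Rightarrow> 'a set set set" where
  "line_graph_edges E = {{e, f} | e f. e \<in> E \<and> f \<in> E \<and> e \<noteq> f \<and> e \<inter> f \<noteq> {}}"

end

theory Submission
  imports Defs
begin

(* Two edges of G that meet share exactly one vertex, so H(L(G)) is a sum over the vertices w of G of
   S(w) = sum of 1/(k(e) + k(f)) over ordered pairs of distinct edges e, f at w, where k(e) = d(w) + d(u) - 2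
   is the degree of e = wu in L(G). Splitting the term 2/(d(w) + d(u)) of every edge wu of H(G) between its
   two ends, with shares adding up to 1, writes H(G) as a sum of vertex charges as well, and it suffices to
   compare S(w) with the charge of w, a comparison involving only d(w), the degrees of the neighbours of w,
   and Delta.
   A pendant edge is charged entirely to its inner end (non-triviality excludes isolated edges); for the
   lower bound, an edge joining a vertex of degree 2 to one of degree at least 3 is charged to the latter.
   At a vertex of degree 2 the comparison is made directly; at a vertex of degree d >= 3 it is made edge
   by edge, since each edge at w meets d - 1 others whose k lies between d - 1 and d + Delta - 2. *)

section \<open>Degrees in a graph and its line graph\<close>

abbreviation incident_edges :: "'a set set \<Rightarrow> 'a \<Rightarrow> 'a set set" where
  "incident_edges E w \<equiv> {e \<in> E. w \<in> e}"

abbreviation edge_neighbours :: "'a set set \<Rightarrow> 'a set \<Rightarrow> 'a set set" where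
  "edge_neighbours E e \<equiv> {f \<in> E. f \<noteq> e \<and> e \<inter> f \<noteq> {}}"

lemma graph_finite_edges: "graph V E \<Longrightarrow> finite E"
  unfolding graph_def by (metis Pow_iff finite_Pow_iff finite_subset subsetI)

lemma graph_edge_other_end:
  assumes "graph V E" "e \<in> E" "w \<in> e"
  obtains u where "e = {w, u}" "u \<noteq> w" "u \<in> V" "w \<in> V"
proof -
  have e: "card e = 2" "e \<subseteq> V" using assms by (auto simp: graph_def)
  then have "card (e - {w}) = 1" using assms(3) by (simp add: card_ge_0_finite)
  then obtain u where "e - {w} = {u}" by (rule card_1_singletonE)
  then have "e = {w, u}" "u \<noteq> w" using assms(3) by auto
  then show ?thesis using that e(2) by auto
qed

lemma graph_edge_eq_doubleton:
  assumes "graph V E" "e \<in> E" "u \<in> e" "v \<in> e" "u \<noteq> v"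
  shows "e = {u, v}"
  using graph_edge_other_end[OF assms(1-3)] assms(4,5) by auto

lemma finite_incident_edges: "graph V E \<Longrightarrow> finite (incident_edges E w)"
  by (simp add: graph_finite_edges)

lemma degree_ge_1: "graph V E \<Longrightarrow> e \<in> E \<Longrightarrow> w \<in> e \<Longrightarrow> 1 \<le> degree E w"
  unfolding degree_def by (auto simp: Suc_le_eq card_gt_0_iff finite_incident_edges)

lemma degree_le_max_degree: "graph V E \<Longrightarrow> w \<in> V \<Longrightarrow> degree E w \<le> max_degree V E"
  unfolding max_degree_def graph_def by simp

lemma incident_edges_degree_1:
  assumes "e \<in> E" "w \<in> e" "degree E w = 1"
  shows "incident_edges E w = {e}"
  using assms by (metis (mono_tags, lifting) card_1_singletonE degree_def mem_Collect_eq singletonD)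

lemma adjacent_rtranclp_closed:
  assumes "(adjacent E)\<^sup>*\<^sup>* v z" "v \<in> S" "\<And>x y. x \<in> S \<Longrightarrow> {x, y} \<in> E \<Longrightarrow> y \<in> S"
  shows "z \<in> S"
  using assms(1,2) by (induction rule: rtranclp_induct) (auto simp: adjacent_def assms(3))

lemma nontrivial_graph_no_isolated_edge:
  assumes g: "graph V E" and nt: "nontrivial_graph V E" and e: "{w, u} \<in> E" "w \<noteq> u"
    and "degree E w = 1"
  shows "degree E u \<noteq> 1"
proof
  assume "degree E u = 1"
  then have only_e: "incident_edges E v = {{w, u}}" if "v \<in> {w, u}" for v
    using that incident_edges_degree_1[OF e(1)] \<open>degree E w = 1\<close> by auto
  have closed: "y \<in> {w, u}" if "x \<in> {w, u}" "{x, y} \<in> E" for x y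
  proof -
    have "{x, y} \<in> incident_edges E x" using that(2) by simp
    then have "{x, y} = {w, u}" unfolding only_e[OF that(1)] by simp
    then show ?thesis by (metis insertCI)
  qed
  have "{f \<in> E. f \<subseteq> component V E w} \<subseteq> {{w, u}}"
  proof
    fix f assume f: "f \<in> {f \<in> E. f \<subseteq> component V E w}"
    have "f \<subseteq> {w, u}"
    proof
      fix z assume "z \<in> f"
      then have "(adjacent E)\<^sup>*\<^sup>* w z" using f by (auto simp: component_def)
      then show "z \<in> {w, u}" by (rule adjacent_rtranclp_closed[OF _ _ closed]) simp
    qed
    moreover have "card f = card {w, u}" using f g e(2) by (simp add: graph_def)
    ultimately show "f \<in> {{w, u}}" using card_subset_eq[of "{w, u}" f] by simp
  qed
  then have "card {f \<in> E. f \<subseteq> component V E w} \<le> 1"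
    using card_mono[of "{{w, u}}"] by simp
  moreover have "w \<in> V" using g e(1) by (auto simp: graph_def)
  with nt have "2 \<le> card {f \<in> E. f \<subseteq> component V E w}"
    by (simp add: nontrivial_graph_def)
  ultimately show False by simp
qed

lemma edge_neighbours_eq_Un:
  assumes "graph V E" "{w, u} \<in> E" "w \<noteq> u"
  shows "edge_neighbours E {w, u} = (incident_edges E w - {{w, u}}) \<union> (incident_edges E u - {{w, u}})"
    and "(incident_edges E w - {{w, u}}) \<inter> (incident_edges E u - {{w, u}}) = {}"
  using graph_edge_eq_doubleton[OF assms(1)] assms(3) by auto

lemma graph_line_graph: "finite E \<Longrightarrow> graph E (line_graph_edges E)"
  unfolding graph_def line_graph_edges_def by (auto simp: card_insert_if)

lemma incident_edges_line_graph:
  "e \<in> E \<Longrightarrow> incident_edges (line_graph_edges E) e = (\<lambda>f. {e, f}) ` edge_neighbours E e"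
  unfolding line_graph_edges_def by (fastforce simp: insert_commute inf_commute)

lemma inj_on_insert_edge_neighbours: "inj_on (\<lambda>f. {e, f}) (edge_neighbours E e)"
  by (rule inj_onI) (auto simp: doubleton_eq_iff)

lemma degree_line_graph:
  assumes "graph V E" "{w, u} \<in> E" "w \<noteq> u"
  shows "degree (line_graph_edges E) {w, u} + 2 = degree E w + degree E u"
proof -
  have "degree (line_graph_edges E) {w, u} = card (edge_neighbours E {w, u})"
    unfolding degree_def incident_edges_line_graph[OF assms(2)]
    by (rule card_image[OF inj_on_insert_edge_neighbours])
  also have "\<dots> = card (incident_edges E w - {{w, u}}) + card (incident_edges E u - {{w, u}})"
    using edge_neighbours_eq_Un[OF assms] finite_incident_edges[OF assms(1)]
    by (simp add: card_Un_disjoint)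
  also have "\<dots> = (degree E w - 1) + (degree E u - 1)"
    using assms(2) finite_incident_edges[OF assms(1)] by (simp add: degree_def)
  finally show ?thesis using degree_ge_1[OF assms(1,2), of w] degree_ge_1[OF assms(1,2), of u] by simp
qed

definition opposite_degree :: "'a set set \<Rightarrow> 'a \<Rightarrow> 'a set \<Rightarrow> nat" where
  "opposite_degree E w e = (\<Sum>u\<in>e - {w}. degree E u)"

lemma opposite_degree_doubleton [simp]: "w \<noteq> u \<Longrightarrow> opposite_degree E w {w, u} = degree E u"
  by (simp add: opposite_degree_def insert_Diff_if)

lemma
  assumes g: "graph V E" and e: "e \<in> E" "w \<in> e"
  shows degree_line_graph_opposite:
      "real (degree (line_graph_edges E) e) = real (degree E w) + real (opposite_degree E w e) - 2"
    and opposite_degree_bounds: "1 \<le> opposite_degree E w e" "opposite_degree E w e \<le> max_degree V E"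
    and opposite_degree_pendant:
      "nontrivial_graph V E \<Longrightarrow> degree E w = 1 \<Longrightarrow> opposite_degree E w e \<noteq> 1"
proof -
  obtain u where u: "e = {w, u}" "u \<noteq> w" "u \<in> V" using graph_edge_other_end[OF assms] by blast
  show "real (degree (line_graph_edges E) e) = real (degree E w) + real (opposite_degree E w e) - 2"
    using degree_line_graph[OF g, of w u] u e by simp
  show "1 \<le> opposite_degree E w e" using degree_ge_1[OF g e(1)] u by simp
  show "opposite_degree E w e \<le> max_degree V E" using degree_le_max_degree[OF g u(3)] u by simp
  show "nontrivial_graph V E \<Longrightarrow> degree E w = 1 \<Longrightarrow> opposite_degree E w e \<noteq> 1"
    using nontrivial_graph_no_isolated_edge[OF g, of w u] u e by auto
qed

section \<open>Vertex decompositions of the harmonic indices\<close>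

lemma sum_edges_endpoints:
  assumes "graph V E"
  shows "(\<Sum>e\<in>E. \<Sum>w\<in>e. F w e) = (\<Sum>w\<in>V. \<Sum>e\<in>incident_edges E w. F w e)"
proof -
  have "(\<Sum>e\<in>E. \<Sum>w\<in>e. F w e) = (\<Sum>e\<in>E. \<Sum>w\<in>{w \<in> V. w \<in> e}. F w e)"
    using assms by (intro sum.cong refl) (auto simp: graph_def)
  also have "\<dots> = (\<Sum>w\<in>V. \<Sum>e\<in>incident_edges E w. F w e)"
    using assms graph_finite_edges[OF assms] by (intro sum.swap_restrict) (auto simp: graph_def)
  finally show ?thesis .
qed

definition charge :: "(nat \<Rightarrow> nat \<Rightarrow> real) \<Rightarrow> nat \<Rightarrow> nat \<Rightarrow> real" where
  "charge W a b = W a b * 2 / (real a + real b)"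

lemma harmonic_index_charge_split:
  fixes W :: "nat \<Rightarrow> nat \<Rightarrow> real"
  assumes g: "graph V E" and nt: "nontrivial_graph V E"
    and W: "\<And>a b. 1 \<le> a \<Longrightarrow> 1 \<le> b \<Longrightarrow> a \<noteq> 1 \<or> b \<noteq> 1 \<Longrightarrow> W a b + W b a = 1"
  shows "harmonic_index E =
    (\<Sum>w\<in>V. \<Sum>e\<in>incident_edges E w. charge W (degree E w) (opposite_degree E w e))"
proof -
  have "2 / (\<Sum>v\<in>e. real (degree E v)) = (\<Sum>w\<in>e. charge W (degree E w) (opposite_degree E w e))"
    if e: "e \<in> E" for e
  proof -
    obtain w u where wu: "e = {w, u}" "w \<noteq> u"
      using e g by (auto simp: graph_def card_2_iff)
    have "1 \<le> degree E w" "1 \<le> degree E u" using degree_ge_1[OF g e] wu by auto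
    moreover have "degree E w \<noteq> 1 \<or> degree E u \<noteq> 1"
      using nontrivial_graph_no_isolated_edge[OF g nt, of w u] e wu by auto
    ultimately have "W (degree E w) (degree E u) + W (degree E u) (degree E w) = 1" by (rule W)
    moreover have "opposite_degree E u e = degree E w" using wu by (simp add: insert_commute)
    ultimately show ?thesis using wu by (simp add: charge_def add_divide_distrib[symmetric] add.commute
          distrib_right[symmetric])
  qed
  then show ?thesis
    unfolding harmonic_index_def sum_edges_endpoints[OF g, symmetric] by (rule sum.cong[OF refl])
qed

lemma harmonic_index_line_graph_split:
  assumes g: "graph V E"
  defines "k \<equiv> \<lambda>e. real (degree (line_graph_edges E) e)"
  shows "harmonic_index (line_graph_edges E) =
    (\<Sum>w\<in>V. \<Sum>e\<in>incident_edges E w. \<Sum>f\<in>incident_edges E w - {e}. 1 / (k e + k f))"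
proof -
  let ?L = "line_graph_edges E"
  have fin: "finite E" using graph_finite_edges[OF g] .
  have "harmonic_index ?L = (\<Sum>p\<in>?L. \<Sum>e\<in>p. 1 / (\<Sum>x\<in>p. k x))"
    using graph_line_graph[OF fin]
    by (auto simp: harmonic_index_def k_def graph_def intro!: sum.cong)
  also have "\<dots> = (\<Sum>e\<in>E. \<Sum>p\<in>incident_edges ?L e. 1 / (\<Sum>x\<in>p. k x))"
    by (rule sum_edges_endpoints[OF graph_line_graph[OF fin]])
  also have "\<dots> = (\<Sum>e\<in>E. \<Sum>f\<in>edge_neighbours E e. 1 / (k e + k f))"
  proof (intro sum.cong refl)
    fix e assume "e \<in> E"
    then have "(\<Sum>p\<in>incident_edges ?L e. 1 / (\<Sum>x\<in>p. k x)) =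
        (\<Sum>f\<in>edge_neighbours E e. 1 / (\<Sum>x\<in>{e, f}. k x))"
      by (simp add: incident_edges_line_graph sum.reindex[OF inj_on_insert_edge_neighbours])
    also have "\<dots> = (\<Sum>f\<in>edge_neighbours E e. 1 / (k e + k f))"
      by (rule sum.cong[OF refl]) (auto simp: sum.insert_if)
    finally show "(\<Sum>p\<in>incident_edges ?L e. 1 / (\<Sum>x\<in>p. k x)) =
        (\<Sum>f\<in>edge_neighbours E e. 1 / (k e + k f))" .
  qed
  also have "\<dots> = (\<Sum>e\<in>E. \<Sum>w\<in>e. \<Sum>f\<in>incident_edges E w - {e}. 1 / (k e + k f))"
  proof (intro sum.cong refl)
    fix e assume e: "e \<in> E"
    then obtain w u where wu: "e = {w, u}" "w \<noteq> u" using g by (auto simp: graph_def card_2_iff)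
    then show "(\<Sum>f\<in>edge_neighbours E e. 1 / (k e + k f)) =
        (\<Sum>w\<in>e. \<Sum>f\<in>incident_edges E w - {e}. 1 / (k e + k f))"
      using edge_neighbours_eq_Un[OF g, of w u] e fin by (simp add: sum.union_disjoint)
  qed
  also have "\<dots> = (\<Sum>w\<in>V. \<Sum>e\<in>incident_edges E w. \<Sum>f\<in>incident_edges E w - {e}. 1 / (k e + k f))"
    by (rule sum_edges_endpoints[OF g])
  finally show ?thesis .
qed

section \<open>Local inequalities at a vertex\<close>

definition lower_ratio :: "nat \<Rightarrow> real" where
  "lower_ratio \<Delta> =
     (if \<Delta> < 3 then 8/11 else if \<Delta> \<le> 4 then 4 / (real \<Delta> + 3) else 3 / (2 * real \<Delta> - 1))"

definition upper_ratio :: "nat \<Rightarrow> real" where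
  "upper_ratio \<Delta> = (if \<Delta> < 3 then 1 else real \<Delta> - 1)"

(* The share of the term of an edge that goes to its end of degree a when the other end has degree b. *)
definition lower_share :: "nat \<Rightarrow> nat \<Rightarrow> real" where
  "lower_share a b =
     (if b = 1 then 1 else if a = 1 then 0
      else if 3 \<le> a \<and> b = 2 then 1 else if a = 2 \<and> 3 \<le> b then 0 else 1/2)"

definition upper_share :: "nat \<Rightarrow> nat \<Rightarrow> real" where
  "upper_share a b = (if b = 1 then 1 else if a = 1 then 0 else 1/2)"

lemma lower_share_swap:
  "1 \<le> a \<Longrightarrow> 1 \<le> b \<Longrightarrow> a \<noteq> 1 \<or> b \<noteq> 1 \<Longrightarrow> lower_share a b + lower_share b a = 1"
  by (auto simp: lower_share_def)

lemma upper_share_swap: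
  "1 \<le> a \<Longrightarrow> 1 \<le> b \<Longrightarrow> a \<noteq> 1 \<or> b \<noteq> 1 \<Longrightarrow> upper_share a b + upper_share b a = 1"
  by (auto simp: upper_share_def)

lemma lower_charge_le:
  assumes "3 \<le> d" "d \<le> \<Delta>" "1 \<le> x" "x \<le> \<Delta>"
  shows "lower_ratio \<Delta> * charge lower_share d x \<le> (real d - 1) / (2 * real d + real x + real \<Delta> - 4)"
proof -
  have "lower_ratio \<Delta> * (2 * lower_share d x) * (2 * real d + real x + real \<Delta> - 4)
        \<le> (real d - 1) * (real d + real x)"
  proof (cases "\<Delta> \<le> 4")
    case True
    then have "\<Delta> \<in> {3, 4}" "d \<in> {3, 4}" "x \<in> {1, 2, 3, 4}" using assms by auto
    then show ?thesis by (auto simp: lower_ratio_def lower_share_def)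
  next
    case False
    (* Cleared of denominators, each case is a polynomial inequality with nonnegative coefficients
       in d - 3, x - 3 and \<Delta> - 5; the products below supply its monomials. *)
    let ?d = "real d" and ?x = "real x" and ?\<Delta> = "real \<Delta>"
    have d: "3 \<le> ?d" and \<Delta>: "5 \<le> ?\<Delta>" using assms False by auto
    then have nonneg: "0 \<le> (?d - 3) * (?\<Delta> - 5)" "0 \<le> (?d - 3) * (?d - 3) * (?\<Delta> - 5)"
      "0 \<le> (?d - 3) * (?d - 3)" by auto
    consider "x = 1" | "x = 2" | "3 \<le> x" using assms by linarith
    then have "3 * (2 * lower_share d x) * (2 * ?d + ?x + ?\<Delta> - 4) \<le> (?d - 1) * (?d + ?x) * (2 * ?\<Delta> - 1)"
    proof cases
      case 1
      then show ?thesis using d \<Delta> nonneg assms by (simp add: lower_share_def algebra_simps)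
    next
      case 2
      then show ?thesis using d \<Delta> nonneg assms by (simp add: lower_share_def algebra_simps)
    next
      case 3
      then have "0 \<le> (?d - 3) * (?x - 3)" "0 \<le> (?x - 3) * (?\<Delta> - 5)" "0 \<le> (?d - 3) * (?x - 3) * (?\<Delta> - 5)"
        using d \<Delta> by auto
      then show ?thesis using 3 d \<Delta> nonneg assms by (simp add: lower_share_def algebra_simps)
    qed
    then show ?thesis using False \<Delta> by (simp add: lower_ratio_def divide_simps mult.assoc)
  qed
  moreover have "0 < real d + real x" "0 < 2 * real d + real x + real \<Delta> - 4" using assms by auto
  ultimately show ?thesis by (simp add: charge_def field_simps)
qed

lemma upper_charge_ge:
  assumes "3 \<le> d" "d \<le> \<Delta>" "1 \<le> x" "x \<le> \<Delta>"
  shows "(real d - 1) / (2 * real d + real x - 3) \<le> upper_ratio \<Delta> * charge upper_share d x"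
proof (cases "x = 1")
  case True
  have "(real d - 1) / (2 * real d + real x - 3) = 1/2" using True assms by (simp add: field_simps)
  also have "\<dots> \<le> (real \<Delta> - 1) * (2 / (real d + 1))" using assms by (simp add: field_simps)
  finally show ?thesis using True assms by (simp add: charge_def upper_share_def upper_ratio_def)
next
  case False
  have "(real d - 1) * (real d + real x) \<le> (real \<Delta> - 1) * (2 * real d + real x - 3)"
    by (rule mult_mono) (use assms in auto)
  moreover have "0 < real d + real x" "0 < 2 * real d + real x - 3" using assms by auto
  ultimately show ?thesis
    using False assms by (simp add: charge_def upper_share_def upper_ratio_def field_simps)
qed

lemma lower_charge_degree2_le:
  assumes "1 \<le> a" "a \<le> \<Delta>" "1 \<le> b" "b \<le> \<Delta>"
  shows "lower_ratio \<Delta> * (charge lower_share 2 a + charge lower_share 2 b) \<le> 2 / (real a + real b)"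
proof -
  have ratio: "0 \<le> lower_ratio \<Delta>" "lower_ratio \<Delta> \<le> 8/11" by (auto simp: lower_ratio_def field_simps)
  have ordered: "lower_ratio \<Delta> * (charge lower_share 2 a + charge lower_share 2 b) \<le> 2 / (real a + real b)"
    if ab: "1 \<le> a" "a \<le> b" "b \<le> \<Delta>" for a b
  proof -
    consider "a = 1" "b = 1" | "a = 1" "b = 2" | "a = 2" "b = 2" | "a = 1" "3 \<le> b" | "a = 2" "3 \<le> b" | "3 \<le> a"
      using ab by force
    then show ?thesis
    proof cases
      case 4
      have "lower_ratio \<Delta> * (1 + real \<Delta>) \<le> 3" using ab 4 by (auto simp: lower_ratio_def divide_simps)
      moreover have "lower_ratio \<Delta> * (1 + real b) \<le> lower_ratio \<Delta> * (1 + real \<Delta>)"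
        using ratio ab by (intro mult_left_mono) auto
      ultimately show ?thesis using 4 by (simp add: charge_def lower_share_def field_simps)
    next
      case 5
      have "lower_ratio \<Delta> * (2 + real \<Delta>) \<le> 8" using ab 5 by (auto simp: lower_ratio_def divide_simps)
      moreover have "lower_ratio \<Delta> * (2 + real b) \<le> lower_ratio \<Delta> * (2 + real \<Delta>)"
        using ratio ab by (intro mult_left_mono) auto
      ultimately show ?thesis using 5 by (simp add: charge_def lower_share_def field_simps)
    qed (use ratio ab in \<open>auto simp: charge_def lower_share_def\<close>)
  qed
  show ?thesis
    using ordered[of a b] ordered[of b a] assms by (cases "a \<le> b") (simp_all add: add.commute)
qed

lemma upper_charge_degree2_ge:
  assumes "1 \<le> a" "a \<le> \<Delta>" "1 \<le> b" "b \<le> \<Delta>"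
  shows "2 / (real a + real b) \<le> upper_ratio \<Delta> * (charge upper_share 2 a + charge upper_share 2 b)"
proof -
  have ratio: "1 \<le> upper_ratio \<Delta>" using assms by (simp add: upper_ratio_def)
  have charge_nonneg: "0 \<le> charge upper_share 2 y" for y by (simp add: charge_def upper_share_def)
  have ordered: "2 / (real a + real b) \<le> upper_ratio \<Delta> * (charge upper_share 2 a + charge upper_share 2 b)"
    if ab: "1 \<le> a" "a \<le> b" "b \<le> \<Delta>" for a b
  proof -
    consider "a = 1" "b = 1" | "a = 1" "2 \<le> b" | "a = 2" "b = 2" | "2 \<le> a" "3 \<le> b" using ab by force
    then show ?thesis
    proof cases
      case 1
      then show ?thesis using ratio by (simp add: charge_def upper_share_def)
    next
      case 2
      have "2 / (real a + real b) \<le> charge upper_share 2 a"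
        using 2 ab by (simp add: charge_def upper_share_def field_simps)
      also have "\<dots> \<le> charge upper_share 2 a + charge upper_share 2 b" using charge_nonneg by simp
      also have "\<dots> \<le> upper_ratio \<Delta> * (charge upper_share 2 a + charge upper_share 2 b)"
        using ratio charge_nonneg[of a] charge_nonneg[of b] by (simp add: mult_le_cancel_right1)
      finally show ?thesis .
    next
      case 3
      then show ?thesis using ratio by (simp add: charge_def upper_share_def)
    next
      case 4
      have "2 / (real a + real b) \<le> 1/2" using 4 by (simp add: field_simps)
      also have "\<dots> \<le> (real \<Delta> - 1) * (1 / (2 + real \<Delta>) + 1 / (2 + real \<Delta>))"
        using 4 ab by (simp add: field_simps)
      also have "\<dots> \<le> (real \<Delta> - 1) * (1 / (2 + real a) + 1 / (2 + real b))"
        using ab 4 by (intro mult_left_mono add_mono frac_le) auto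
      finally show ?thesis using 4 ab by (simp add: charge_def upper_share_def upper_ratio_def)
    qed
  qed
  show ?thesis
    using ordered[of a b] ordered[of b a] assms by (cases "a \<le> b") (simp_all add: add.commute)
qed

lemma vertex_lower_bound:
  fixes x :: "'b \<Rightarrow> nat" and k :: "'b \<Rightarrow> real"
  assumes A: "finite A" "card A = d" and "d \<le> \<Delta>"
    and x: "\<And>e. e \<in> A \<Longrightarrow> 1 \<le> x e \<and> x e \<le> \<Delta>"
    and pendant: "\<And>e. e \<in> A \<Longrightarrow> d = 1 \<Longrightarrow> x e \<noteq> 1"
    and k: "\<And>e. e \<in> A \<Longrightarrow> k e = real d + real (x e) - 2"
  shows "lower_ratio \<Delta> * (\<Sum>e\<in>A. charge lower_share d (x e)) \<le> (\<Sum>e\<in>A. \<Sum>f\<in>A - {e}. 1 / (k e + k f))"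
proof -
  consider "d = 0" | "d = 1" | "d = 2" | "3 \<le> d" by linarith
  then show ?thesis
  proof cases
    case 1
    then show ?thesis using A by simp
  next
    case 2
    then obtain e where "A = {e}" using A card_1_singletonE by blast
    then show ?thesis using pendant 2 by (simp add: charge_def lower_share_def)
  next
    case 3
    then obtain e f where ef: "A = {e, f}" "e \<noteq> f" using A card_2_iff by metis
    then have "(\<Sum>e\<in>A. \<Sum>f\<in>A - {e}. 1 / (k e + k f)) = 2 / (real (x e) + real (x f))"
      using k 3 by (simp add: insert_Diff_if add.commute)
    then show ?thesis using lower_charge_degree2_le[of "x e" \<Delta> "x f"] x ef 3 by simp
  next
    case 4
    have "lower_ratio \<Delta> * charge lower_share d (x e) \<le> (\<Sum>f\<in>A - {e}. 1 / (k e + k f))" if e: "e \<in> A" for e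
    proof -
      have "lower_ratio \<Delta> * charge lower_share d (x e) \<le> (real d - 1) / (2 * real d + real (x e) + real \<Delta> - 4)"
        using lower_charge_le 4 assms x[OF e] by blast
      also have "\<dots> = (\<Sum>f\<in>A - {e}. 1 / (2 * real d + real (x e) + real \<Delta> - 4))"
        using A e 4 by simp
      also have "\<dots> \<le> (\<Sum>f\<in>A - {e}. 1 / (k e + k f))"
        by (rule sum_mono) (use x e k 4 in \<open>auto intro!: frac_le\<close>)
      finally show ?thesis .
    qed
    then show ?thesis by (simp add: sum_distrib_left sum_mono)
  qed
qed

lemma vertex_upper_bound:
  fixes x :: "'b \<Rightarrow> nat" and k :: "'b \<Rightarrow> real"
  assumes A: "finite A" "card A = d" and "d \<le> \<Delta>"
    and x: "\<And>e. e \<in> A \<Longrightarrow> 1 \<le> x e \<and> x e \<le> \<Delta>"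
    and k: "\<And>e. e \<in> A \<Longrightarrow> k e = real d + real (x e) - 2"
  shows "(\<Sum>e\<in>A. \<Sum>f\<in>A - {e}. 1 / (k e + k f)) \<le> upper_ratio \<Delta> * (\<Sum>e\<in>A. charge upper_share d (x e))"
proof -
  consider "d = 0" | "d = 1" | "d = 2" | "3 \<le> d" by linarith
  then show ?thesis
  proof cases
    case 1
    then show ?thesis using A by simp
  next
    case 2
    then obtain e where "A = {e}" using A card_1_singletonE by blast
    then show ?thesis using 2 \<open>d \<le> \<Delta>\<close> by (simp add: charge_def upper_share_def upper_ratio_def)
  next
    case 3
    then obtain e f where ef: "A = {e, f}" "e \<noteq> f" using A card_2_iff by metis
    then have "(\<Sum>e\<in>A. \<Sum>f\<in>A - {e}. 1 / (k e + k f)) = 2 / (real (x e) + real (x f))"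
      using k 3 by (simp add: insert_Diff_if add.commute)
    then show ?thesis using upper_charge_degree2_ge[of "x e" \<Delta> "x f"] x ef 3 by simp
  next
    case 4
    have "(\<Sum>f\<in>A - {e}. 1 / (k e + k f)) \<le> upper_ratio \<Delta> * charge upper_share d (x e)" if e: "e \<in> A" for e
    proof -
      have "(\<Sum>f\<in>A - {e}. 1 / (k e + k f)) \<le> (\<Sum>f\<in>A - {e}. 1 / (2 * real d + real (x e) - 3))"
        by (rule sum_mono) (use x e k 4 in \<open>auto intro!: frac_le\<close>)
      also have "\<dots> = (real d - 1) / (2 * real d + real (x e) - 3)"
        using A e 4 by simp
      also have "\<dots> \<le> upper_ratio \<Delta> * charge upper_share d (x e)"
        using upper_charge_ge 4 assms x[OF e] by blast
      finally show ?thesis .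
    qed
    then show ?thesis by (simp add: sum_distrib_left sum_mono)
  qed
qed

lemma harmonic_index_line_graph_ge:
  assumes g: "graph V E" and nt: "nontrivial_graph V E"
  shows "lower_ratio (max_degree V E) * harmonic_index E \<le> harmonic_index (line_graph_edges E)"
proof -
  let ?\<Delta> = "max_degree V E" and ?k = "\<lambda>e. real (degree (line_graph_edges E) e)"
  let ?charge = "\<lambda>w e. charge lower_share (degree E w) (opposite_degree E w e)"
  have "harmonic_index E = (\<Sum>w\<in>V. \<Sum>e\<in>incident_edges E w. ?charge w e)"
    by (rule harmonic_index_charge_split[OF g nt lower_share_swap])
  then have "lower_ratio ?\<Delta> * harmonic_index E =
      (\<Sum>w\<in>V. lower_ratio ?\<Delta> * (\<Sum>e\<in>incident_edges E w. ?charge w e))"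
    by (simp add: sum_distrib_left)
  also have "\<dots> \<le> (\<Sum>w\<in>V. \<Sum>e\<in>incident_edges E w. \<Sum>f\<in>incident_edges E w - {e}. 1 / (?k e + ?k f))"
  proof (rule sum_mono)
    fix w assume "w \<in> V"
    then show "lower_ratio ?\<Delta> * (\<Sum>e\<in>incident_edges E w. ?charge w e)
      \<le> (\<Sum>e\<in>incident_edges E w. \<Sum>f\<in>incident_edges E w - {e}. 1 / (?k e + ?k f))"
      using finite_incident_edges[OF g] degree_le_max_degree[OF g] opposite_degree_bounds[OF g]
        opposite_degree_pendant[OF g _ _ nt] degree_line_graph_opposite[OF g]
      by (intro vertex_lower_bound) (auto simp: degree_def)
  qed
  also have "\<dots> = harmonic_index (line_graph_edges E)"
    by (rule harmonic_index_line_graph_split[OF g, symmetric])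
  finally show ?thesis .
qed

lemma harmonic_index_line_graph_le:
  assumes g: "graph V E" and nt: "nontrivial_graph V E"
  shows "harmonic_index (line_graph_edges E) \<le> upper_ratio (max_degree V E) * harmonic_index E"
proof -
  let ?\<Delta> = "max_degree V E" and ?k = "\<lambda>e. real (degree (line_graph_edges E) e)"
  let ?charge = "\<lambda>w e. charge upper_share (degree E w) (opposite_degree E w e)"
  have "harmonic_index (line_graph_edges E)
      = (\<Sum>w\<in>V. \<Sum>e\<in>incident_edges E w. \<Sum>f\<in>incident_edges E w - {e}. 1 / (?k e + ?k f))"
    by (rule harmonic_index_line_graph_split[OF g])
  also have "\<dots> \<le> (\<Sum>w\<in>V. upper_ratio ?\<Delta> * (\<Sum>e\<in>incident_edges E w. ?charge w e))"
  proof (rule sum_mono)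
    fix w assume "w \<in> V"
    then show "(\<Sum>e\<in>incident_edges E w. \<Sum>f\<in>incident_edges E w - {e}. 1 / (?k e + ?k f))
      \<le> upper_ratio ?\<Delta> * (\<Sum>e\<in>incident_edges E w. ?charge w e)"
      using finite_incident_edges[OF g] degree_le_max_degree[OF g] opposite_degree_bounds[OF g]
        degree_line_graph_opposite[OF g]
      by (intro vertex_upper_bound) (auto simp: degree_def)
  qed
  also have "\<dots> = upper_ratio ?\<Delta> * harmonic_index E"
    using harmonic_index_charge_split[OF g nt upper_share_swap] by (simp add: sum_distrib_left)
  finally show ?thesis .
qed

theorem theorem3p5:
  fixes V :: "'a set" and E :: "'a set set"
  assumes "graph V E" and "nontrivial_graph V E"
  defines "\<Delta> \<equiv> max_degree V E"
  shows "(\<Delta> < 3 \<longrightarrow>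
            8 / 11 * harmonic_index E \<le> harmonic_index (line_graph_edges E) \<and>
            harmonic_index (line_graph_edges E) \<le> harmonic_index E)
       \<and> (3 \<le> \<Delta> \<and> \<Delta> \<le> 4 \<longrightarrow>
            4 / (real \<Delta> + 3) * harmonic_index E \<le> harmonic_index (line_graph_edges E) \<and>
            harmonic_index (line_graph_edges E) \<le> (real \<Delta> - 1) * harmonic_index E)
       \<and> (\<Delta> > 4 \<longrightarrow>
            3 / (2 * real \<Delta> - 1) * harmonic_index E \<le> harmonic_index (line_graph_edges E) \<and>
            harmonic_index (line_graph_edges E) \<le> (real \<Delta> - 1) * harmonic_index E)"
  using harmonic_index_line_graph_ge[OF assms(1,2)] harmonic_index_line_graph_le[OF assms(1,2)]
  unfolding \<Delta>_def lower_ratio_def upper_ratio_def by auto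

end
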